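(* Let $G=(A\cup B,E)$ be a bipartite graph with $|A|\le 3$. Then for every ordering $\sigma_A$ of $A$, $G$ admits a Stick representation in which, ordering the horizontal segments by where they touch the ground line from left to right, the $i$th horizontal segment corresponds to the $i$th vertex of $\sigma_A$.
   Context: A Stick representation of a bipartite graph $G=(A\cup B,E)$ (with $A$ horizontal and $B$ vertical) assigns to each vertex of $A$ a horizontal segment and to each vertex of $B$ a vertical segment such that the left endpoints of all horizontal segments and the bottom endpoints of all vertical segments lie on a fixed ground line $\ell$ of slope $-1$, and a horizontal and a vertical segment intersect if and only if the corresponding vertices are adjacent in $G$. *)

theory Defs
  imports Complex_Main
begin

text \<open>Ground line: the line y = -x of slope -1 (any fixed line of slope -1 is
  equivalent up to translation).\<close>
definition ground_line :: "(real \<times> real) set" where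
  "ground_line = {(t, -t) | t. True}"

definition hseg :: "real \<Rightarrow> real \<Rightarrow> (real \<times> real) set" where
  "hseg x l = {(u, -x) | u. x \<le> u \<and> u \<le> x + l}"

definition vseg :: "real \<Rightarrow> real \<Rightarrow> (real \<times> real) set" where
  "vseg y l = {(y, v) | v. -y \<le> v \<and> v \<le> -y + l}"

definition stick_rep ::
  "'a set \<Rightarrow> 'b set \<Rightarrow> ('a \<Rightarrow> 'b \<Rightarrow> bool) \<Rightarrow>
   ('a \<Rightarrow> real) \<Rightarrow> ('a \<Rightarrow> real) \<Rightarrow> ('b \<Rightarrow> real) \<Rightarrow> ('b \<Rightarrow> real) \<Rightarrow> bool" where
  "stick_rep A B adj hx hl vx vl \<longleftrightarrow>
     (\<forall>a\<in>A. hl a \<ge> 0) \<and> (\<forall>b\<in>B. vl b \<ge> 0) \<and>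
     (\<forall>a\<in>A. \<forall>b\<in>B. adj a b \<longleftrightarrow> hseg (hx a) (hl a) \<inter> vseg (vx b) (vl b) \<noteq> {})"

end

theory Submission
  imports Defs
begin

text \<open>Put the horizontal segments of \<open>\<sigma>\<close> at positions 0, 1, 2 of the ground line, with
  lengths 3, 1, 3. A vertical segment at position \<open>y\<close> of length \<open>m\<close> meets the one at \<open>k\<close>
  iff \<open>k \<le> y\<close> and \<open>y - k\<close> is at most both lengths; suitable choices of \<open>(y, m)\<close> make
  the set met any of the eight subsets, i.e. vertical segments shatter the three horizontal
  ones. Each vertex of \<open>B\<close> then receives a vertical segment meeting exactly its neighbours.\<close>

lemma hseg_inter_vseg_iff:
  "hseg x l \<inter> vseg y m \<noteq> {} \<longleftrightarrow> x \<le> y \<and> y - x \<le> l \<and> y - x \<le> m"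
proof
  assume "x \<le> y \<and> y - x \<le> l \<and> y - x \<le> m"
  then have "(y, -x) \<in> hseg x l \<inter> vseg y m"
    unfolding hseg_def vseg_def by auto
  then show "hseg x l \<inter> vseg y m \<noteq> {}" by blast
qed (auto simp: hseg_def vseg_def)

definition vertical_sticks_shatter :: "(nat \<Rightarrow> real) \<Rightarrow> (nat \<Rightarrow> real) \<Rightarrow> nat \<Rightarrow> bool" where
  "vertical_sticks_shatter x l n \<longleftrightarrow>
     (\<forall>S \<subseteq> {..<n}. \<exists>y m. m \<ge> 0 \<and> {k. k < n \<and> hseg (x k) (l k) \<inter> vseg y m \<noteq> {}} = S)"

lemma stick_rep_if_vertical_sticks_shatter:
  fixes \<sigma> :: "'a list" and adj :: "'a \<Rightarrow> 'b \<Rightarrow> bool"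
  assumes "distinct \<sigma>" and "set \<sigma> = A"
    and "strict_mono_on {..<length \<sigma>} x" and "\<forall>k < length \<sigma>. l k \<ge> 0"
    and "length \<sigma> \<le> n" and "vertical_sticks_shatter x l n"
  shows "\<exists>hx hl vx vl. stick_rep A B adj hx hl vx vl \<and>
           (\<forall>i j. i < j \<and> j < length \<sigma> \<longrightarrow> hx (\<sigma> ! i) < hx (\<sigma> ! j))"
proof -
  define nbrs where "nbrs b = {k. k < length \<sigma> \<and> adj (\<sigma> ! k) b}" for b
  have "\<forall>b. \<exists>y m. m \<ge> 0 \<and> {k. k < n \<and> hseg (x k) (l k) \<inter> vseg y m \<noteq> {}} = nbrs b"
  proof
    fix b
    have "nbrs b \<subseteq> {..<n}" using assms(5) by (auto simp: nbrs_def)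
    then show "\<exists>y m. m \<ge> 0 \<and> {k. k < n \<and> hseg (x k) (l k) \<inter> vseg y m \<noteq> {}} = nbrs b"
      using assms(6) unfolding vertical_sticks_shatter_def by blast
  qed
  then have "\<exists>vx vl. \<forall>b. vl b \<ge> 0 \<and>
      {k. k < n \<and> hseg (x k) (l k) \<inter> vseg (vx b) (vl b) \<noteq> {}} = nbrs b"
    by (simp only: choice_iff)
  then obtain vx vl where vstick: "vl b \<ge> 0"
    "{k. k < n \<and> hseg (x k) (l k) \<inter> vseg (vx b) (vl b) \<noteq> {}} = nbrs b" for b
    by blast
  define pos where "pos = the_inv_into {..<length \<sigma>} ((!) \<sigma>)"
  define hx where "hx a = x (pos a)" for a
  define hl where "hl a = l (pos a)" for a
  have "pos (\<sigma> ! k) = k" if "k < length \<sigma>" for k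
    unfolding pos_def using that assms(1) by (simp add: the_inv_into_f_f inj_on_nth)
  then have hx_nth: "hx (\<sigma> ! k) = x k" and hl_nth: "hl (\<sigma> ! k) = l k" if "k < length \<sigma>" for k
    using that by (simp_all add: hx_def hl_def)
  have index_exists: "\<exists>k < length \<sigma>. a = \<sigma> ! k" if "a \<in> A" for a
    using that assms(2) by (auto simp: in_set_conv_nth)
  have "hl a \<ge> 0" if "a \<in> A" for a
    using index_exists[OF that] assms(4) hl_nth by auto
  moreover have "adj a b \<longleftrightarrow> hseg (hx a) (hl a) \<inter> vseg (vx b) (vl b) \<noteq> {}"
    if a: "a \<in> A" for a b
  proof -
    obtain k where k: "k < length \<sigma>" "a = \<sigma> ! k"
      using index_exists[OF a] by blast
    then have "adj a b \<longleftrightarrow> k \<in> nbrs b"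
      by (simp add: nbrs_def)
    also have "\<dots> \<longleftrightarrow> k \<in> {k. k < n \<and> hseg (x k) (l k) \<inter> vseg (vx b) (vl b) \<noteq> {}}"
      by (simp only: vstick(2))
    also have "\<dots> \<longleftrightarrow> hseg (x k) (l k) \<inter> vseg (vx b) (vl b) \<noteq> {}"
      using k(1) assms(5) by simp
    finally show ?thesis
      using k by (simp add: hx_nth hl_nth)
  qed
  ultimately have "stick_rep A B adj hx hl vx vl"
    using vstick(1) by (simp add: stick_rep_def)
  moreover have "hx (\<sigma> ! i) < hx (\<sigma> ! j)" if "i < j" "j < length \<sigma>" for i j
    using that assms(3) by (simp add: hx_nth strict_mono_onD)
  ultimately show ?thesis by blast
qed

lemma vertical_sticks_shatter_three:
  "vertical_sticks_shatter real (\<lambda>k. if k = 1 then 1 else 3) 3"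
  unfolding vertical_sticks_shatter_def
proof (intro allI impI)
  fix S :: "nat set"
  assume "S \<subseteq> {..<3}"
  define hits where "hits y m =
    {k. k < 3 \<and> hseg (real k) (if k = 1 then 1 else 3) \<inter> vseg y m \<noteq> {}}" for y m
  have less_3: "k < 3 \<longleftrightarrow> k = 0 \<or> k = 1 \<or> k = 2" for k :: nat by auto
  have realized: "hits (-1) 0 = {}" "hits 0 0 = {0}" "hits 1 0 = {1}" "hits 2 0 = {2}"
    "hits 1 1 = {0, 1}" "hits 2 1 = {1, 2}" "hits 3 3 = {0, 2}" "hits 2 2 = {0, 1, 2}"
    by (auto simp: hits_def hseg_inter_vseg_iff less_3)
  have "S \<in> {{}, {0}, {1}, {2}, {0, 1}, {1, 2}, {0, 2}, {0, 1, 2}}"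
  proof -
    have "S \<in> Pow {0, 1, 2}"
      using \<open>S \<subseteq> {..<3}\<close> less_3 by auto
    then show ?thesis by (simp add: Pow_insert insert_commute)
  qed
  then show "\<exists>y m. m \<ge> 0 \<and> hits y m = S"
    by (elim insertE emptyE) (erule ssubst, intro exI conjI[rotated], rule realized, simp)+
qed

theorem mainTheorem6:
  fixes A :: "'a set" and B :: "'b set" and adj :: "'a \<Rightarrow> 'b \<Rightarrow> bool"
    and \<sigma> :: "'a list"
  assumes "finite A" and "finite B" and "card A \<le> 3"
    and "distinct \<sigma>" and "set \<sigma> = A"
  shows "\<exists>hx hl vx vl. stick_rep A B adj hx hl vx vl \<and>
           (\<forall>i j. i < j \<and> j < length \<sigma> \<longrightarrow> hx (\<sigma> ! i) < hx (\<sigma> ! j))"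
proof -
  have "strict_mono_on {..<length \<sigma>} real"
    by (simp add: strict_mono_onI)
  moreover have "\<forall>k < length \<sigma>. (0::real) \<le> (if k = 1 then 1 else 3)"
    by simp
  moreover have "length \<sigma> \<le> 3"
    using assms(3-5) distinct_card by fastforce
  ultimately show ?thesis
    using assms(4,5) vertical_sticks_shatter_three by (intro stick_rep_if_vertical_sticks_shatter)
qed

end
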